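(* Given a bounded word equation $u \,\dot{=}\, v$ with $u,v \in \Xi^*$ and bounds $B:\Gamma\to\mathbb{N}$, the equation automaton $A(u \,\dot{=}\, v,B)$ reaches an accepting state if and only if there exists a substitution $S$ such that $S(u)=S(v)$ (i.e. $S$ is a solution of $u \,\dot{=}\, v$) and $|S(X)| \leq B(X)$ for all $X \in \Gamma$.
   Context: Let $\Xi=\Sigma\cup\Gamma$ with $\Sigma$ a finite set of letters and $\Gamma$ a finite set of variables, $\Sigma\cap\Gamma=\emptyset$. A substitution is a morphism $S:\Xi^*\to\Sigma^*$ fixing letters. A bounded word equation is a word equation $u \,\dot{=}\, v$ together with bounds $b_X=B(X)$ on the lengths of the images of the variables. Each variable $X$ is replaced by a sequence of "filled variables" $X^{(0)}\cdots X^{(b_X-1)}$, each of which is mapped to exactly one symbol of $\Sigma_\lambda=\Sigma\cup\{\lambda\}$, where the fresh symbol $\lambda$ is a placeholder for the empty word (marking unused positions at the end of a variable). Write $\hat u,\hat v$ for the resulting filled patterns over $\Sigma\cup\hat\Gamma$ ($\hat\Gamma$ the set of filled variables). For a partial filled substitution $\hat S$, two symbols $a,b$ are compatible, $a \sim_{\hat S} b$, iff $\hat S(a)=\hat S(b)$ or one of $\hat S(a),\hat S(b)$ is undefined; $S[X\mapsto b]$ denotes $S\cup\{X\mapsto b\}$ if $S(X)$ is undefined and $S$ otherwise. The equation automaton $A(u \,\dot{=}\, v,B)=(Q,\delta,I,F)$ has states $((i,j),S)$ with $i\in\{0,\dots,|\hat u|\}$, $j\in\{0,\dots,|\hat v|\}$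 and $S$ a partial map from filled symbols to $\Sigma_\lambda$; transitions on input $a\in\Sigma_\lambda$: $\delta(((i,j),S),a)=((i+1,j+1),S[\hat u[i]\mapsto a][\hat v[j]\mapsto a])$ if $\hat u[i]\sim_{\hat S}\hat v[j]\sim_{\hat S} a$; $=((i+1,j),S[\hat u[i]\mapsto\lambda])$ if $\hat u[i]\sim_{\hat S}\lambda=a$; $=((i,j+1),S[\hat v[j]\mapsto\lambda])$ if $\hat v[j]\sim_{\hat S}\lambda=a$ (nondeterministic). Initial state $((0,0),\{a\mapsto a \mid a\in\Sigma_\lambda\})$; final states are all $((|\hat u|,|\hat v|),S)$. *)

theory Defs
  imports Main
begin

text \<open>Symbols of \<open>Xi = Sigma \<union> Gamma\<close>: letters (type 'a = Sigma) and variables (type 'v = Gamma).\<close>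
datatype ('a, 'v) sym = Let 'a | Var 'v

definition subst :: "('v \<Rightarrow> 'a list) \<Rightarrow> ('a, 'v) sym list \<Rightarrow> 'a list" where
  "subst S w = concat (map (\<lambda>x. case x of Let a \<Rightarrow> [a] | Var X \<Rightarrow> S X) w)"

text \<open>Sigma_lambda is 'a option, with None playing the role of lambda.
  Filled symbols: elements of Sigma_lambda, and filled variables X^(k).\<close>
datatype ('a, 'v) fsym = FC "'a option" | FV 'v nat

fun fill :: "('v \<Rightarrow> nat) \<Rightarrow> ('a, 'v) sym \<Rightarrow> ('a, 'v) fsym list" where
  "fill B (Let a) = [FC (Some a)]"
| "fill B (Var X) = map (FV X) [0..<B X]"

definition filled :: "('v \<Rightarrow> nat) \<Rightarrow> ('a, 'v) sym list \<Rightarrow> ('a, 'v) fsym list" where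
  "filled B w = concat (map (fill B) w)"

type_synonym ('a, 'v) fsubst = "('a, 'v) fsym \<Rightarrow> 'a option option"

definition compat :: "('a, 'v) fsubst \<Rightarrow> ('a, 'v) fsym \<Rightarrow> ('a, 'v) fsym \<Rightarrow> bool" where
  "compat S x y \<longleftrightarrow> S x = S y \<or> S x = None \<or> S y = None"

definition upd :: "('a, 'v) fsubst \<Rightarrow> ('a, 'v) fsym \<Rightarrow> 'a option \<Rightarrow> ('a, 'v) fsubst" where
  "upd S x b = (if S x = None then S(x \<mapsto> b) else S)"

type_synonym ('a, 'v) state = "(nat \<times> nat) \<times> ('a, 'v) fsubst"

inductive eq_step :: "('a, 'v) fsym list \<Rightarrow> ('a, 'v) fsym list \<Rightarrow> ('a, 'v) state \<Rightarrow> 'a option \<Rightarrow> ('a, 'v) state \<Rightarrow> bool"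
  for uh vh where
  both: "\<lbrakk> i < length uh; j < length vh;
          compat S (uh ! i) (vh ! j); compat S (vh ! j) (FC a); compat S (uh ! i) (FC a) \<rbrakk>
     \<Longrightarrow> eq_step uh vh ((i, j), S) a ((i + 1, j + 1), upd (upd S (uh ! i) a) (vh ! j) a)"
| left: "\<lbrakk> i < length uh; compat S (uh ! i) (FC None); j \<le> length vh \<rbrakk>
     \<Longrightarrow> eq_step uh vh ((i, j), S) None ((i + 1, j), upd S (uh ! i) None)"
| right: "\<lbrakk> j < length vh; compat S (vh ! j) (FC None); i \<le> length uh \<rbrakk>
     \<Longrightarrow> eq_step uh vh ((i, j), S) None ((i, j + 1), upd S (vh ! j) None)"

definition init_fsubst :: "('a, 'v) fsubst" where
  "init_fsubst x = (case x of FC c \<Rightarrow> Some c | FV _ _ \<Rightarrow> None)"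

definition accepts :: "('a, 'v) sym list \<Rightarrow> ('a, 'v) sym list \<Rightarrow> ('v \<Rightarrow> nat) \<Rightarrow> bool" where
  "accepts u v B \<longleftrightarrow>
     (\<exists>S. (\<lambda>s s'. \<exists>a. eq_step (filled B u) (filled B v) s a s')\<^sup>*\<^sup>*
             ((0, 0), init_fsubst) ((length (filled B u), length (filled B v)), S))"

end

theory Submission
  imports Defs
begin

(* A total map G from filled symbols to letters-or-lambda that fixes the letters is the same thing
   as a substitution S with |S X| <= B X (unfill, fill_subst): reading a filled pattern through G
   and dropping the lambdas spells its image under S.
   Soundness: each transition appends the same letter (or nothing) to the words spelled by the two
   consumed prefixes, under every total G extending the current partial map; at an accepting state
   take G to be the final map itself.
   Completeness: the filled version G of a solution guides a run: skip a position that G sends to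
   lambda on either side; otherwise both sides show the same next letter, and the automaton reads it. *)

abbreviation eq_steps :: "('a, 'v) fsym list \<Rightarrow> ('a, 'v) fsym list \<Rightarrow> ('a, 'v) state \<Rightarrow> ('a, 'v) state \<Rightarrow> bool"
  where "eq_steps uh vh \<equiv> (\<lambda>s s'. \<exists>a. eq_step uh vh s a s')\<^sup>*\<^sup>*"

lemma map_filter_append: "List.map_filter f (xs @ ys) = List.map_filter f xs @ List.map_filter f ys"
  by (simp add: List.map_filter_def)

lemma length_map_filter_le: "length (List.map_filter f xs) \<le> length xs"
  by (simp add: List.map_filter_def)

lemma map_filter_take_Suc:
  assumes "i < length xs" "G (xs ! i) = a"
  shows "List.map_filter G (take (Suc i) xs) = List.map_filter G (take i xs) @ List.map_filter id [a]"
  using assms by (simp add: take_Suc_conv_app_nth map_filter_append split: option.split)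

lemma map_filter_drop_nth:
  assumes "i < length xs" "G (xs ! i) = a"
  shows "List.map_filter G (drop i xs) = List.map_filter id [a] @ List.map_filter G (drop (Suc i) xs)"
  using assms by (simp flip: Cons_nth_drop_Suc split: option.split)

lemma map_filter_drop_cases:
  assumes "i \<le> length xs" "j \<le> length ys" "(i, j) \<noteq> (length xs, length ys)"
    and "List.map_filter G (drop i xs) = List.map_filter G (drop j ys)"
  obtains "i < length xs" "G (xs ! i) = None"
  | "j < length ys" "G (ys ! j) = None"
  | a where "i < length xs" "j < length ys" "G (xs ! i) = Some a" "G (ys ! j) = Some a"
      "List.map_filter G (drop (Suc i) xs) = List.map_filter G (drop (Suc j) ys)"
proof (cases "i < length xs \<and> G (xs ! i) = None \<or> j < length ys \<and> G (ys ! j) = None")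
  case True
  then show ?thesis
    using that(1,2) by blast
next
  case False
  have "i < length xs \<and> j < length ys"
  proof (rule ccontr)
    assume "\<not> ?thesis"
    then have "i = length xs \<and> j < length ys \<or> i < length xs \<and> j = length ys"
      using assms(1-3) by auto
    then show False
      using False assms(4) by (auto simp: map_filter_drop_nth)
  qed
  with False assms(4) show ?thesis
    using that(3) by (auto simp: map_filter_drop_nth)
qed

text \<open>Lambda positions are dropped wherever they occur: the automaton does not force them to the
  end of a variable, and soundness does not need it.\<close>
definition unfill :: "('v \<Rightarrow> nat) \<Rightarrow> (('a, 'v) fsym \<Rightarrow> 'a option) \<Rightarrow> 'v \<Rightarrow> 'a list" where
  "unfill B G X = List.map_filter G (map (FV X) [0..<B X])"

fun fill_subst :: "('v \<Rightarrow> 'a list) \<Rightarrow> ('a, 'v) fsym \<Rightarrow> 'a option" where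
  "fill_subst S (FC c) = c"
| "fill_subst S (FV X k) = (if k < length (S X) then Some (S X ! k) else None)"

lemma map_filter_filled:
  assumes "\<And>c. G (FC c) = c"
  shows "List.map_filter G (filled B w) = subst (unfill B G) w"
proof (induction w)
  case (Cons x w)
  then show ?case
    by (cases x) (simp_all add: filled_def subst_def unfill_def map_filter_append assms)
qed (simp add: filled_def subst_def)

lemma length_unfill_le: "length (unfill B G X) \<le> B X"
  unfolding unfill_def using length_map_filter_le[of G "map (FV X) [0..<B X]"] by simp

lemma unfill_fill_subst:
  assumes "length (S X) \<le> B X"
  shows "unfill B (fill_subst S) X = S X"
proof -
  have "[0..<B X] = [0..<length (S X)] @ [length (S X)..<B X]"
    using assms by (metis le_add_diff_inverse upt_add_eq_append zero_le)
  moreover have "List.map_filter (fill_subst S) (map (FV X) [0..<length (S X)])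
      = map ((!) (S X)) [0..<length (S X)]"
    by (simp add: List.map_filter_def comp_def)
  moreover have "map ((!) (S X)) [0..<length (S X)] = S X"
    by (rule map_nth)
  moreover have "List.map_filter (fill_subst S) (map (FV X) [length (S X)..<B X]) = []"
    by (simp add: List.map_filter_def filter_empty_conv)
  ultimately show ?thesis
    by (simp add: unfill_def map_filter_append)
qed

lemma map_le_upd_self: "S \<subseteq>\<^sub>m upd S x b"
  by (auto simp: map_le_def upd_def)

lemma upd_at_compat:
  assumes "S (FC b) = Some b" "compat S x (FC b)"
  shows "upd S x b x = Some b"
  using assms by (auto simp: compat_def upd_def)

lemma map_le_Some_compD: "S \<subseteq>\<^sub>m Some \<circ> G \<Longrightarrow> S x = Some b \<Longrightarrow> G x = b"
  by (auto simp: map_le_def dom_def)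

lemma init_fsubst_le_iff: "init_fsubst \<subseteq>\<^sub>m S \<longleftrightarrow> (\<forall>c. S (FC c) = Some c)"
  by (auto simp: map_le_def init_fsubst_def dom_def split: fsym.splits)

lemma compat_if_map_le:
  assumes "S \<subseteq>\<^sub>m Some \<circ> G" "G x = G y"
  shows "compat S x y"
proof -
  have "S z = None \<or> S z = Some (G z)" for z
    using assms(1) by (auto simp: map_le_def dom_def)
  with assms(2) show ?thesis
    unfolding compat_def by metis
qed

lemma upd_map_le: "S \<subseteq>\<^sub>m Some \<circ> G \<Longrightarrow> upd S x (G x) \<subseteq>\<^sub>m Some \<circ> G"
  by (auto simp: map_le_def upd_def dom_def)

text \<open>Quantifying over all total extensions \<open>G\<close> makes the invariant stable as \<open>S\<close> grows.\<close>
definition consistent :: "('a, 'v) fsym list \<Rightarrow> ('a, 'v) fsym list \<Rightarrow> ('a, 'v) state \<Rightarrow> bool" where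
  "consistent uh vh s \<longleftrightarrow> (case s of ((i, j), S) \<Rightarrow> init_fsubst \<subseteq>\<^sub>m S \<and>
     (\<forall>G. S \<subseteq>\<^sub>m Some \<circ> G \<longrightarrow> List.map_filter G (take i uh) = List.map_filter G (take j vh)))"

lemma consistent_extend:
  assumes "consistent uh vh ((i, j), S)" "S \<subseteq>\<^sub>m S'"
    and "\<And>G. S' \<subseteq>\<^sub>m Some \<circ> G \<Longrightarrow> List.map_filter G (take i uh) = List.map_filter G (take j vh)
      \<Longrightarrow> List.map_filter G (take i' uh) = List.map_filter G (take j' vh)"
  shows "consistent uh vh ((i', j'), S')"
  using assms map_le_trans[OF assms(2)] map_le_trans[OF _ assms(2)] unfolding consistent_def by blast

lemma eq_step_consistent:
  assumes "eq_step uh vh s a s'" "consistent uh vh s"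
  shows "consistent uh vh s'"
  using assms(1)
proof cases
  case (both i j S)
  let ?S' = "upd (upd S (uh ! i) a) (vh ! j) a"
  from both have cons: "consistent uh vh ((i, j), S)" and "i < length uh" "j < length vh"
    and "compat S (uh ! i) (FC a)" "compat S (vh ! j) (FC a)"
    using assms(2) by simp_all
  moreover from cons have "init_fsubst \<subseteq>\<^sub>m S"
    by (simp add: consistent_def)
  ultimately have read: "?S' (uh ! i) = Some a" "?S' (vh ! j) = Some a"
    unfolding init_fsubst_le_iff compat_def upd_def by auto
  have "List.map_filter G (take (Suc i) uh) = List.map_filter G (take (Suc j) vh)"
    if "?S' \<subseteq>\<^sub>m Some \<circ> G" "List.map_filter G (take i uh) = List.map_filter G (take j vh)" for G
    using that map_le_Some_compD[OF that(1) read(1)] map_le_Some_compD[OF that(1) read(2)]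
      \<open>i < length uh\<close> \<open>j < length vh\<close> by (simp add: map_filter_take_Suc)
  with cons have "consistent uh vh ((Suc i, Suc j), ?S')"
    by (rule consistent_extend[OF _ map_le_trans[OF map_le_upd_self map_le_upd_self]])
  with both show ?thesis
    by simp
next
  case (left i S j)
  let ?S' = "upd S (uh ! i) None"
  from left have cons: "consistent uh vh ((i, j), S)" and "i < length uh"
    and "compat S (uh ! i) (FC None)"
    using assms(2) by simp_all
  then have read: "?S' (uh ! i) = Some None"
    by (simp add: upd_at_compat consistent_def init_fsubst_le_iff)
  have "List.map_filter G (take (Suc i) uh) = List.map_filter G (take j vh)"
    if "?S' \<subseteq>\<^sub>m Some \<circ> G" "List.map_filter G (take i uh) = List.map_filter G (take j vh)" for G
    using that map_le_Some_compD[OF that(1) read] \<open>i < length uh\<close> by (simp add: map_filter_take_Suc)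
  with cons have "consistent uh vh ((Suc i, j), ?S')"
    by (rule consistent_extend[OF _ map_le_upd_self])
  with left show ?thesis
    by simp
next
  case (right j S i)
  let ?S' = "upd S (vh ! j) None"
  from right have cons: "consistent uh vh ((i, j), S)" and "j < length vh"
    and "compat S (vh ! j) (FC None)"
    using assms(2) by simp_all
  then have read: "?S' (vh ! j) = Some None"
    by (simp add: upd_at_compat consistent_def init_fsubst_le_iff)
  have "List.map_filter G (take i uh) = List.map_filter G (take (Suc j) vh)"
    if "?S' \<subseteq>\<^sub>m Some \<circ> G" "List.map_filter G (take i uh) = List.map_filter G (take j vh)" for G
    using that map_le_Some_compD[OF that(1) read] \<open>j < length vh\<close> by (simp add: map_filter_take_Suc)
  with cons have "consistent uh vh ((i, Suc j), ?S')"
    by (rule consistent_extend[OF _ map_le_upd_self])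
  with right show ?thesis
    by simp
qed

lemma eq_steps_consistent:
  "eq_steps uh vh s s' \<Longrightarrow> consistent uh vh s \<Longrightarrow> consistent uh vh s'"
  by (induction rule: rtranclp_induct) (auto intro: eq_step_consistent)

lemma accepts_imp_bounded_solution:
  assumes "accepts u v B"
  shows "\<exists>S. subst S u = subst S v \<and> (\<forall>X. length (S X) \<le> B X)"
proof -
  obtain S where "eq_steps (filled B u) (filled B v)
      ((0, 0), init_fsubst) ((length (filled B u), length (filled B v)), S)"
    using assms by (auto simp: accepts_def)
  then have "consistent (filled B u) (filled B v) ((length (filled B u), length (filled B v)), S)"
    by (rule eq_steps_consistent) (simp add: consistent_def)
  then have init: "init_fsubst \<subseteq>\<^sub>m S" and words: "\<And>G. S \<subseteq>\<^sub>m Some \<circ> G \<Longrightarrow>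
      List.map_filter G (filled B u) = List.map_filter G (filled B v)"
    by (simp_all add: consistent_def)
  \<comment> \<open>junk off \<open>dom S\<close>, where \<open>S \<subseteq>\<^sub>m Some \<circ> G\<close> imposes nothing\<close>
  define G where "G x = the (S x)" for x
  have "S \<subseteq>\<^sub>m Some \<circ> G"
    by (auto simp: map_le_def G_def)
  moreover have "G (FC c) = c" for c
    using init by (simp add: G_def init_fsubst_le_iff)
  ultimately have "subst (unfill B G) u = subst (unfill B G) v"
    using words map_filter_filled by metis
  moreover have "\<forall>X. length (unfill B G X) \<le> B X"
    by (simp add: length_unfill_le)
  ultimately show ?thesis
    by blast
qed

definition guided :: "(('a, 'v) fsym \<Rightarrow> 'a option) \<Rightarrow> ('a, 'v) fsym list \<Rightarrow> ('a, 'v) fsym list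
    \<Rightarrow> ('a, 'v) state \<Rightarrow> bool" where
  "guided G uh vh s \<longleftrightarrow> (case s of ((i, j), S) \<Rightarrow> i \<le> length uh \<and> j \<le> length vh \<and>
     S \<subseteq>\<^sub>m Some \<circ> G \<and> List.map_filter G (drop i uh) = List.map_filter G (drop j vh))"

lemma guided_step:
  assumes fixes_letters: "\<And>c. G (FC c) = c" and "guided G uh vh ((i, j), S)"
    and not_final: "(i, j) \<noteq> (length uh, length vh)"
  shows "\<exists>a i' j' S'. eq_step uh vh ((i, j), S) a ((i', j'), S') \<and> guided G uh vh ((i', j'), S')
    \<and> length uh - i' + (length vh - j') < length uh - i + (length vh - j)"
proof -
  have i: "i \<le> length uh" and j: "j \<le> length vh" and S: "S \<subseteq>\<^sub>m Some \<circ> G"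
    and words: "List.map_filter G (drop i uh) = List.map_filter G (drop j vh)"
    using assms(2) by (simp_all add: guided_def)
  from i j not_final words show ?thesis
  proof (cases rule: map_filter_drop_cases)
    case 1
    let ?S' = "upd S (uh ! i) None"
    have "eq_step uh vh ((i, j), S) None ((i + 1, j), ?S')"
      using 1 j fixes_letters by (intro eq_step.left compat_if_map_le[OF S]) auto
    moreover have "guided G uh vh ((i + 1, j), ?S')"
      using 1 j words upd_map_le[OF S, of "uh ! i"] by (simp add: guided_def map_filter_drop_nth)
    moreover have "length uh - (i + 1) + (length vh - j) < length uh - i + (length vh - j)"
      using 1 by linarith
    ultimately show ?thesis
      by blast
  next
    case 2
    let ?S' = "upd S (vh ! j) None"
    have "eq_step uh vh ((i, j), S) None ((i, j + 1), ?S')"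
      using 2 i fixes_letters by (intro eq_step.right compat_if_map_le[OF S]) auto
    moreover have "guided G uh vh ((i, j + 1), ?S')"
      using 2 i words upd_map_le[OF S, of "vh ! j"] by (simp add: guided_def map_filter_drop_nth)
    moreover have "length uh - i + (length vh - (j + 1)) < length uh - i + (length vh - j)"
      using 2 by linarith
    ultimately show ?thesis
      by blast
  next
    case (3 a)
    let ?S' = "upd (upd S (uh ! i) (Some a)) (vh ! j) (Some a)"
    have "eq_step uh vh ((i, j), S) (Some a) ((i + 1, j + 1), ?S')"
      using 3 fixes_letters by (intro eq_step.both compat_if_map_le[OF S]) auto
    moreover have "guided G uh vh ((i + 1, j + 1), ?S')"
      using 3 upd_map_le[OF upd_map_le[OF S, of "uh ! i"], of "vh ! j"] by (simp add: guided_def)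
    moreover have "length uh - (i + 1) + (length vh - (j + 1)) < length uh - i + (length vh - j)"
      using 3 by linarith
    ultimately show ?thesis
      by blast
  qed
qed

lemma guided_reaches_final:
  assumes "\<And>c. G (FC c) = c" "guided G uh vh ((i, j), S)"
  shows "\<exists>S'. eq_steps uh vh ((i, j), S) ((length uh, length vh), S')"
  using assms(2)
proof (induction "length uh - i + (length vh - j)" arbitrary: i j S rule: less_induct)
  case less
  show ?case
  proof (cases "(i, j) = (length uh, length vh)")
    case False
    then obtain a i' j' S' where step: "eq_step uh vh ((i, j), S) a ((i', j'), S')"
      and "guided G uh vh ((i', j'), S')"
      and "length uh - i' + (length vh - j') < length uh - i + (length vh - j)"
      using guided_step[OF assms(1) less.prems] by blast
    then obtain S'' where "eq_steps uh vh ((i', j'), S') ((length uh, length vh), S'')"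
      using less.hyps[of i' j' S'] by blast
    with step have "eq_steps uh vh ((i, j), S) ((length uh, length vh), S'')"
      by (blast intro: converse_rtranclp_into_rtranclp)
    then show ?thesis
      by blast
  qed auto
qed

lemma bounded_solution_imp_accepts:
  assumes "subst S u = subst S v" "\<forall>X. length (S X) \<le> B X"
  shows "accepts u v B"
proof -
  have "unfill B (fill_subst S) = S"
    using assms(2) by (simp add: fun_eq_iff unfill_fill_subst)
  then have "List.map_filter (fill_subst S) (filled B w) = subst S w" for w
    by (simp add: map_filter_filled)
  moreover have "init_fsubst \<subseteq>\<^sub>m Some \<circ> fill_subst S"
    by (auto simp: map_le_def init_fsubst_def dom_def split: fsym.splits)
  ultimately have "guided (fill_subst S) (filled B u) (filled B v) ((0, 0), init_fsubst)"
    using assms(1) by (simp add: guided_def)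
  then show ?thesis
    unfolding accepts_def by (rule guided_reaches_final[OF fill_subst.simps(1)])
qed

theorem mainTheorem1:
  fixes u v :: "('a::finite, 'v::finite) sym list" and B :: "'v \<Rightarrow> nat"
  shows "accepts u v B \<longleftrightarrow> (\<exists>S. subst S u = subst S v \<and> (\<forall>X. length (S X) \<le> B X))"
  using accepts_imp_bounded_solution bounded_solution_imp_accepts by blast

end
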